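(* The map $\nabla:M_X\to M_X$ is a homomorphism of $\mathfrak g$-modules with $\nabla^2=0$, mapping $M_X^{m,n}$ to $M_X^{m-1,n-1}$; moreover its restrictions $M_A^{m,n}\to M_A^{m-1,n-1}$ ($m,n\ge1$), $M_B^{-m,n}\to M_B^{-m-1,n-1}$ ($m\ge0,n\ge1$), $M_C^{-m,-n}\to M_C^{-m-1,-n-1}$ ($m,n\ge0$), $M_D^{m,-n}\to M_D^{m-1,-n-1}$ ($m\ge1,n\ge0$) are nonzero.
   Context: Let $\Lambda(4)$ be the Grassmann superalgebra on odd generators $\xi_1,\dots,\xi_4$; $\xi_I=\xi_{i_1}\cdots\xi_{i_r}$, $\xi_{ij}=\xi_i\xi_j$. Let $K(1,4)_+=\mathbb C[t]\otimes\Lambda(4)$ with bracket $[f,g]=(2f-\sum_i\xi_i\partial_{\xi_i}f)\partial_tg-\partial_tf\,(2g-\sum_i\xi_i\partial_{\xi_i}g)+(-1)^{p(f)}\sum_i\partial_{\xi_i}f\,\partial_{\xi_i}g$, and $\mathfrak g=K(1,4)_+\oplus\mathbb CC$ the central extension by the 2-cocycle $\psi$ whose only nonzero values on the basis $\{t^m\xi_I\}$ are (up to skew-symmetry) $\psi(1,\xi_1\xi_2\xi_3\xi_4)=-2$, $\psi(\xi_i,\partial_{\xi_i}(\xi_1\xi_2\xi_3\xi_4))=-1$. Grade by $\deg t^m\xi_I=2m+|I|-2$, $\deg C=0$; $\mathfrak g_0=\langle C,t,\xi_{ij}\rangle$. Let $\eta_i$ be the image of $\xi_i$ in $U(\mathfrak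 g_{<0})$; $w_{11}=\eta_2+i\eta_1$, $w_{22}=\eta_2-i\eta_1$, $w_{12}=-\eta_4+i\eta_3$, $w_{21}=\eta_4+i\eta_3$. The semisimple part $\mathfrak g_0^{ss}$ is spanned by $e_x=\frac12(-\xi_{13}-\xi_{24}-i\xi_{14}+i\xi_{23})$, $f_x=\frac12(\xi_{13}+\xi_{24}-i\xi_{14}+i\xi_{23})$, $h_x=-i\xi_{12}+i\xi_{34}$, $e_y=\frac12(-\xi_{13}+\xi_{24}+i\xi_{14}+i\xi_{23})$, $f_y=\frac12(\xi_{13}-\xi_{24}+i\xi_{14}+i\xi_{23})$, $h_y=-i\xi_{12}-i\xi_{34}$, identified with $x_1\partial_{x_2},x_2\partial_{x_1},x_1\partial_{x_1}-x_2\partial_{x_2},y_1\partial_{y_2},y_2\partial_{y_1},y_1\partial_{y_1}-y_2\partial_{y_2}$ respectively. Let $V_A=\mathbb C[x_1,x_2,y_1,y_2]$, $V_B=\mathbb C[\partial_{x_1},\partial_{x_2},y_1,y_2]$, $V_C=\mathbb C[\partial_{x_1},\partial_{x_2},\partial_{y_1},\partial_{y_2}]$, $V_D=\mathbb C[x_1,x_2,\partial_{y_1},\partial_{y_2}]$ (polynomials in commuting variables), on which $\mathfrak g_0^{ss}$ acts by derivations with $x_i\partial_{x_j}(x_k)=\delta_{jk}x_i$, $x_i\partial_{x_j}(\partial_{x_k})=-\delta_{ik}\partial_{x_j}$, $x_i\partial_{x_j}$ killing $y$- and $\partial_y$-variables, and symmetrically for $y$. Let $E_x,E_y$ be the derivations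 $x_1\partial_{x_1}+x_2\partial_{x_2}$, $y_1\partial_{y_1}+y_2\partial_{y_2}$ with the same rule; $t$ acts as $-\frac12(E_x+E_y)+i_X$ and $C$ as $\frac12(E_x-E_y)+j_X$, $(i_X,j_X)=(0,0),(1,-1),(2,0),(1,1)$ for $X=A,B,C,D$. $V_X^{m,n}$ is the subspace where $E_x=m,E_y=n$ (an irreducible $\mathfrak g_0$-module). $M_X^{m,n}=U(\mathfrak g)\otimes_{U(\mathfrak g_{\ge0})}V_X^{m,n}\cong U(\mathfrak g_{<0})\otimes V_X^{m,n}$ with $\mathfrak g_{>0}$ acting trivially on $V_X^{m,n}$, and $M_X=\bigoplus_{m,n}M_X^{m,n}$. For $u\in U(\mathfrak g_{<0})$ and linear $\phi:V_X\to V_Y$, $(u\otimes\phi)(u'\otimes v)=u'u\otimes\phi(v)$. On $V_X$, $\partial_{x_j}$ is differentiation in $x_j$ for $X\in\{A,D\}$ and multiplication by $\partial_{x_j}$ for $X\in\{B,C\}$; $\partial_{y_j}$ is differentiation in $y_j$ for $X\in\{A,B\}$ and multiplication by $\partial_{y_j}$ for $X\in\{C,D\}$. $\nabla=\sum_{a,b\in\{1,2\}}w_{ab}\otimes\partial_{x_a}\partial_{y_b}$. *)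

theory Defs
  imports Complex_Main "HOL-Library.Poly_Mapping"
begin

definition cmul :: "complex \<Rightarrow> ('a \<Rightarrow>\<^sub>0 complex) \<Rightarrow> ('a \<Rightarrow>\<^sub>0 complex)" where
  "cmul c p = Poly_Mapping.map (\<lambda>x. c * x) p"

definition lext :: "('a \<Rightarrow> ('b \<Rightarrow>\<^sub>0 complex)) \<Rightarrow> ('a \<Rightarrow>\<^sub>0 complex) \<Rightarrow> ('b \<Rightarrow>\<^sub>0 complex)" where
  "lext f p = (\<Sum>a\<in>Poly_Mapping.keys p. cmul (Poly_Mapping.lookup p a) (f a))"

section \<open>The Lie superalgebra g = K(1,4)_+ + C C, on its basis\<close>

datatype idx = J1 | J2 | J3 | J4

fun ordi :: "idx \<Rightarrow> nat" where
  "ordi J1 = 1" | "ordi J2 = 2" | "ordi J3 = 3" | "ordi J4 = 4"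

definition allidx :: "idx set" where "allidx = {J1, J2, J3, J4}"

text \<open>basis of g: Kb m I stands for t^m xi_I (xi_I ordered increasingly), Cb for the central C\<close>
datatype gb = Kb nat "idx set" | Cb

fun par :: "gb \<Rightarrow> nat" where
  "par (Kb m I) = card I mod 2" | "par Cb = 0"

fun gdeg :: "gb \<Rightarrow> int" where
  "gdeg (Kb m I) = 2 * int m + int (card I) - 2" | "gdeg Cb = 0"

text \<open>xi_I xi_J = gsign I J * xi_(I Un J)\<close>
definition gsign :: "idx set \<Rightarrow> idx set \<Rightarrow> complex" where
  "gsign I J = (if I \<inter> J \<noteq> {} then 0
     else (-1) ^ card {(a, b). a \<in> I \<and> b \<in> J \<and> ordi b < ordi a})"

text \<open>(left) derivative: d/dxi_i xi_I = fst (dxi i I) * xi_(snd (dxi i I))\<close>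
definition dxi :: "idx \<Rightarrow> idx set \<Rightarrow> complex \<times> idx set" where
  "dxi i I = (if i \<in> I then ((-1) ^ card {j \<in> I. ordi j < ordi i}, I - {i}) else (0, I))"

text \<open>bracket of K(1,4)_+ on basis elements t^m xi_I, t^n xi_J\<close>
definition kbr :: "nat \<Rightarrow> idx set \<Rightarrow> nat \<Rightarrow> idx set \<Rightarrow> (gb \<Rightarrow>\<^sub>0 complex)" where
  "kbr m I n J =
     Poly_Mapping.single (Kb (m + n - 1) (I \<union> J))
       (((2 - of_nat (card I)) * of_nat n - of_nat m * (2 - of_nat (card J))) * gsign I J)
   + cmul ((-1) ^ card I)
       (\<Sum>i\<in>allidx. Poly_Mapping.single (Kb (m + n) (snd (dxi i I) \<union> snd (dxi i J)))
            (fst (dxi i I) * fst (dxi i J) * gsign (snd (dxi i I)) (snd (dxi i J))))"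

text \<open>the 2-cocycle psi on basis elements\<close>
definition psi :: "nat \<Rightarrow> idx set \<Rightarrow> nat \<Rightarrow> idx set \<Rightarrow> complex" where
  "psi m I n J =
     (if m = 0 \<and> n = 0 \<and> I = {} \<and> J = allidx then -2
      else if m = 0 \<and> n = 0 \<and> I = allidx \<and> J = {} then 2
      else if m = 0 \<and> n = 0 \<and> (\<exists>i. I = {i} \<and> J = allidx - {i})
        then - fst (dxi (THE i. I = {i}) allidx)
      else if m = 0 \<and> n = 0 \<and> (\<exists>i. J = {i} \<and> I = allidx - {i})
        then - fst (dxi (THE i. J = {i}) allidx)
      else 0)"

fun gbr :: "gb \<Rightarrow> gb \<Rightarrow> (gb \<Rightarrow>\<^sub>0 complex)" where
  "gbr (Kb m I) (Kb n J) = kbr m I n J + Poly_Mapping.single Cb (psi m I n J)"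
| "gbr Cb _ = 0"
| "gbr _ Cb = 0"

section \<open>U(g_<0): basis Theta^k eta_I, encoded as (k, I)\<close>

type_synonym ub = "nat \<times> idx set"

definition lmul_eta :: "idx \<Rightarrow> ub \<Rightarrow> (ub \<Rightarrow>\<^sub>0 complex)" where
  "lmul_eta i u = (let k = fst u; I = snd u;
       s = (-1) ^ card {j \<in> I. ordi j < ordi i} :: complex in
     if i \<notin> I then Poly_Mapping.single (k, insert i I) s
     else Poly_Mapping.single (k + 1, I - {i}) (- s / 2))"

definition rmul_eta :: "idx \<Rightarrow> ub \<Rightarrow> (ub \<Rightarrow>\<^sub>0 complex)" where
  "rmul_eta i u = (let k = fst u; I = snd u;
       s = (-1) ^ card {j \<in> I. ordi i < ordi j} :: complex in
     if i \<notin> I then Poly_Mapping.single (k, insert i I) s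
     else Poly_Mapping.single (k + 1, I - {i}) (- s / 2))"

definition rmul_w :: "nat \<Rightarrow> nat \<Rightarrow> ub \<Rightarrow> (ub \<Rightarrow>\<^sub>0 complex)" where
  "rmul_w a b u =
     (if a = 1 \<and> b = 1 then rmul_eta J2 u + cmul \<i> (rmul_eta J1 u)
      else if a = 2 \<and> b = 2 then rmul_eta J2 u - cmul \<i> (rmul_eta J1 u)
      else if a = 1 \<and> b = 2 then - rmul_eta J4 u + cmul \<i> (rmul_eta J3 u)
      else rmul_eta J4 u + cmul \<i> (rmul_eta J3 u))"

datatype VX = XA | XB | XC | XD

text \<open>monomial (a1,a2,c1,c2): exponents of the two x-slot variables (x_j or d_x_j)
  and of the two y-slot variables (y_j or d_y_j)\<close>
type_synonym mono = "nat \<times> nat \<times> nat \<times> nat"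

definition xdual :: "VX \<Rightarrow> bool" where "xdual X = (X = XB \<or> X = XC)"
definition ydual :: "VX \<Rightarrow> bool" where "ydual X = (X = XC \<or> X = XD)"

definition Ex :: "VX \<Rightarrow> mono \<Rightarrow> int" where
  "Ex X v = (case v of (a1, a2, c1, c2) \<Rightarrow>
      if xdual X then - int (a1 + a2) else int (a1 + a2))"
definition Ey :: "VX \<Rightarrow> mono \<Rightarrow> int" where
  "Ey X v = (case v of (a1, a2, c1, c2) \<Rightarrow>
      if ydual X then - int (c1 + c2) else int (c1 + c2))"

definition iX :: "VX \<Rightarrow> int" where
  "iX X = (case X of XA \<Rightarrow> 0 | XB \<Rightarrow> 1 | XC \<Rightarrow> 2 | XD \<Rightarrow> 1)"
definition jX :: "VX \<Rightarrow> int" where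
  "jX X = (case X of XA \<Rightarrow> 0 | XB \<Rightarrow> -1 | XC \<Rightarrow> 0 | XD \<Rightarrow> 1)"

text \<open>action of z_i d_(z_j) (i,j in {1,2}) on a monomial z^a of one slot, as
  (coefficient, new exponents); dual = the slot consists of the d_(z_k)\<close>
definition slot_op :: "bool \<Rightarrow> nat \<Rightarrow> nat \<Rightarrow> nat \<times> nat \<Rightarrow> complex \<times> (nat \<times> nat)" where
  "slot_op dual i j a = (case a of (a1, a2) \<Rightarrow>
     if \<not> dual then
       (if i = 1 \<and> j = 1 then (of_nat a1, (a1, a2))
        else if i = 2 \<and> j = 2 then (of_nat a2, (a1, a2))
        else if i = 1 \<and> j = 2 then (of_nat a2, (a1 + 1, a2 - 1))
        else (of_nat a1, (a1 - 1, a2 + 1)))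
     else
       (if i = 1 \<and> j = 1 then (- of_nat a1, (a1, a2))
        else if i = 2 \<and> j = 2 then (- of_nat a2, (a1, a2))
        else if i = 1 \<and> j = 2 then (- of_nat a1, (a1 - 1, a2 + 1))
        else (- of_nat a2, (a1 + 1, a2 - 1))))"

definition xop :: "VX \<Rightarrow> nat \<Rightarrow> nat \<Rightarrow> mono \<Rightarrow> (mono \<Rightarrow>\<^sub>0 complex)" where
  "xop X i j v = (case v of (a1, a2, c1, c2) \<Rightarrow>
     (case slot_op (xdual X) i j (a1, a2) of (c, (b1, b2)) \<Rightarrow>
        Poly_Mapping.single (b1, b2, c1, c2) c))"
definition yop :: "VX \<Rightarrow> nat \<Rightarrow> nat \<Rightarrow> mono \<Rightarrow> (mono \<Rightarrow>\<^sub>0 complex)" where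
  "yop X i j v = (case v of (a1, a2, c1, c2) \<Rightarrow>
     (case slot_op (ydual X) i j (c1, c2) of (c, (d1, d2)) \<Rightarrow>
        Poly_Mapping.single (a1, a2, d1, d2) c))"

definition e_x where "e_x X v = xop X 1 2 v"
definition f_x where "f_x X v = xop X 2 1 v"
definition h_x where "h_x X v = xop X 1 1 v - xop X 2 2 v"
definition e_y where "e_y X v = yop X 1 2 v"
definition f_y where "f_y X v = yop X 2 1 v"
definition h_y where "h_y X v = yop X 1 1 v - yop X 2 2 v"

text \<open>action of the basis of g_0 on a monomial of V_X, obtained by inverting the
  given formulas for e_x, f_x, h_x, e_y, f_y, h_y in terms of xi_ij\<close>
definition g0act :: "VX \<Rightarrow> gb \<Rightarrow> mono \<Rightarrow> (mono \<Rightarrow>\<^sub>0 complex)" where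
  "g0act X b v = (case b of
      Cb \<Rightarrow> Poly_Mapping.single v (of_int (Ex X v - Ey X v) / 2 + of_int (jX X))
    | Kb m I \<Rightarrow>
       (if m = 1 \<and> I = {} then
          Poly_Mapping.single v (- of_int (Ex X v + Ey X v) / 2 + of_int (iX X))
        else if m = 0 \<and> I = {J1, J2} then cmul (\<i> / 2) (h_x X v + h_y X v)
        else if m = 0 \<and> I = {J3, J4} then cmul (- \<i> / 2) (h_x X v - h_y X v)
        else if m = 0 \<and> I = {J1, J3} then cmul (1 / 2) (f_x X v - e_x X v + f_y X v - e_y X v)
        else if m = 0 \<and> I = {J2, J4} then cmul (1 / 2) (f_x X v - e_x X v - f_y X v + e_y X v)
        else if m = 0 \<and> I = {J2, J3} then cmul (- \<i> / 2) (e_x X v + f_x X v + e_y X v + f_y X v)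
        else if m = 0 \<and> I = {J1, J4} then cmul (- \<i> / 2) (e_y X v + f_y X v - e_x X v - f_x X v)
        else 0))"

definition dx :: "VX \<Rightarrow> nat \<Rightarrow> mono \<Rightarrow> (mono \<Rightarrow>\<^sub>0 complex)" where
  "dx X a v = (case v of (a1, a2, c1, c2) \<Rightarrow>
     if xdual X then
       (if a = 1 then Poly_Mapping.single (a1 + 1, a2, c1, c2) 1
        else Poly_Mapping.single (a1, a2 + 1, c1, c2) 1)
     else
       (if a = 1 then Poly_Mapping.single (a1 - 1, a2, c1, c2) (of_nat a1)
        else Poly_Mapping.single (a1, a2 - 1, c1, c2) (of_nat a2)))"
definition dy :: "VX \<Rightarrow> nat \<Rightarrow> mono \<Rightarrow> (mono \<Rightarrow>\<^sub>0 complex)" where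
  "dy X b v = (case v of (a1, a2, c1, c2) \<Rightarrow>
     if ydual X then
       (if b = 1 then Poly_Mapping.single (a1, a2, c1 + 1, c2) 1
        else Poly_Mapping.single (a1, a2, c1, c2 + 1) 1)
     else
       (if b = 1 then Poly_Mapping.single (a1, a2, c1 - 1, c2) (of_nat c1)
        else Poly_Mapping.single (a1, a2, c1, c2 - 1) (of_nat c2)))"

section \<open>The induced modules M_X = U(g_<0) (x) V_X\<close>

type_synonym melt = "(ub \<times> mono) \<Rightarrow>\<^sub>0 complex"

definition tensor :: "(ub \<Rightarrow>\<^sub>0 complex) \<Rightarrow> (mono \<Rightarrow>\<^sub>0 complex) \<Rightarrow> melt" where
  "tensor u v = (\<Sum>p\<in>Poly_Mapping.keys u. \<Sum>q\<in>Poly_Mapping.keys v.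
      Poly_Mapping.single (p, q) (Poly_Mapping.lookup u p * Poly_Mapping.lookup v q))"

definition Mspace :: "VX \<Rightarrow> int \<Rightarrow> int \<Rightarrow> melt set" where
  "Mspace X m n = {x. \<forall>k\<in>Poly_Mapping.keys x. Ex X (snd k) = m \<and> Ey X (snd k) = n}"

text \<open>nabla = sum_(a,b) w_ab (x) d_(x_a) d_(y_b), with (w (x) phi)(u' (x) v) = u' w (x) phi v\<close>
definition nabla :: "VX \<Rightarrow> melt \<Rightarrow> melt" where
  "nabla X = lext (\<lambda>(u, v). \<Sum>a\<in>{1, 2}. \<Sum>b\<in>{1, 2}.
                      tensor (rmul_w a b u) (lext (dy X b) (dx X a v)))"

definition gact :: "(gb \<Rightarrow> melt \<Rightarrow> melt) \<Rightarrow> (gb \<Rightarrow>\<^sub>0 complex) \<Rightarrow> melt \<Rightarrow> melt" where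
  "gact rho z x = (\<Sum>c\<in>Poly_Mapping.keys z. cmul (Poly_Mapping.lookup z c) (rho c x))"

text \<open>rho (given on the basis of g) is the g-module structure of the induced module
  U(g) (x)_(U(g_>=0)) V_X, realised on U(g_<0) (x) V_X via PBW: it is a representation of
  the Lie superalgebra g, g_<0 acts by left multiplication, and on 1 (x) V_X the
  subalgebra g_0 acts through V_X while g_>0 acts by zero.  These conditions determine
  rho uniquely.\<close>
definition induced_rep :: "VX \<Rightarrow> (gb \<Rightarrow> melt \<Rightarrow> melt) \<Rightarrow> bool" where
  "induced_rep X rho \<longleftrightarrow>
     (\<forall>b x y. rho b (x + y) = rho b x + rho b y) \<and>
     (\<forall>b c x. rho b (cmul c x) = cmul c (rho b x)) \<and>
     (\<forall>b1 b2 x. rho b1 (rho b2 x) - cmul ((-1) ^ (par b1 * par b2)) (rho b2 (rho b1 x))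
                 = gact rho (gbr b1 b2) x) \<and>
     (\<forall>u v. rho (Kb 0 {}) (Poly_Mapping.single (u, v) 1)
              = Poly_Mapping.single ((fst u + 1, snd u), v) 1) \<and>
     (\<forall>i u v. rho (Kb 0 {i}) (Poly_Mapping.single (u, v) 1)
              = tensor (lmul_eta i u) (Poly_Mapping.single v 1)) \<and>
     (\<forall>b v. gdeg b = 0 \<longrightarrow> rho b (Poly_Mapping.single ((0, {}), v) 1)
              = tensor (Poly_Mapping.single (0, {}) 1) (g0act X b v)) \<and>
     (\<forall>b v. gdeg b > 0 \<longrightarrow> rho b (Poly_Mapping.single ((0, {}), v) 1) = 0)"

end

theory Submission
  imports Defs
begin

(*
  On U(g_<0) (x) V_X the operator nabla is right multiplication by w_ab on the first factor combined
  with d_(x_a) d_(y_b) on the second, summed over a and b. Hence it commutes with the left action of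
  g_<0, which is generated by Theta (the image of 1) and the eta_i, and it lowers E_x and E_y by one.
  From eta_i eta_j + eta_j eta_i = - delta_ij Theta, the w_ab anticommute whenever they share an
  index, while w_11 w_22 + w_22 w_11 = -2 Theta = - (w_12 w_21 + w_21 w_12); since the derivatives
  commute, the terms of nabla^2 cancel.

  For equivariance, the vectors on which nabla commutes with all of g form a subspace that is stable
  under g_<0 by the bracket relations, and M_X is generated by 1 (x) V_X under g_<0. On 1 (x) V_X
  the subalgebra g_0 acts through V_X and g_>0 acts by zero, so it suffices that nabla (1 (x) v)
  transforms under g_0 like 1 (x) v and is killed by g_>0: in degree >= 2 because [b, eta_j] still
  has positive degree, and for the eight basis elements of degree 0 and the eight of degree 1 by
  direct computation with the Weyl-algebra relations.

  Nonvanishing: the image of 1 (x) x_1^m y_1^n (with d_(x_1), d_(y_1) in place of x_1, y_1 for the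
  dual slots) has a nonzero eta_2-coefficient.
*)

section \<open>Finitely supported linear combinations\<close>

lemma lookup_cmul [simp]: "Poly_Mapping.lookup (cmul c p) k = c * Poly_Mapping.lookup p k"
  unfolding cmul_def by (simp add: Poly_Mapping.map.rep_eq when_def)

lemma cmul_add_right [simp]: "cmul c (p + q) = cmul c p + cmul c q"
  and cmul_add_left: "cmul (c + d) p = cmul c p + cmul d p"
  and cmul_diff_right [simp]: "cmul c (p - q) = cmul c p - cmul c q"
  and cmul_minus_right [simp]: "cmul c (- p) = - cmul c p"
  and cmul_minus_left [simp]: "cmul (- c) p = - cmul c p"
  and cmul_cmul [simp]: "cmul c (cmul d p) = cmul (c * d) p"
  and cmul_zero_right [simp]: "cmul c 0 = 0"
  and cmul_zero_left [simp]: "cmul 0 p = 0"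
  and cmul_one [simp]: "cmul 1 p = p"
  and cmul_single [simp]: "cmul c (Poly_Mapping.single k d) = Poly_Mapping.single k (c * d)"
  by (rule poly_mapping_eqI; simp add: lookup_add lookup_minus lookup_single when_def algebra_simps)+

lemma cmul_sum: "cmul c (sum f A) = (\<Sum>a\<in>A. cmul c (f a))"
  by (rule poly_mapping_eqI) (simp add: lookup_sum sum_distrib_left)

lemma keys_cmul_subset: "Poly_Mapping.keys (cmul c p) \<subseteq> Poly_Mapping.keys p"
  by (auto simp: in_keys_iff)

lemma lext_eq_sum_superset:
  assumes "finite S" "Poly_Mapping.keys p \<subseteq> S"
  shows "lext f p = (\<Sum>a\<in>S. cmul (Poly_Mapping.lookup p a) (f a))"
  unfolding lext_def
  by (rule sum.mono_neutral_left) (use assms in \<open>auto simp: in_keys_iff\<close>)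

lemma lext_add [simp]: "lext f (p + q) = lext f p + lext f q"
proof -
  let ?S = "Poly_Mapping.keys p \<union> Poly_Mapping.keys q"
  have "Poly_Mapping.keys (p + q) \<subseteq> ?S" by (rule keys_add)
  then show ?thesis
    by (subst (1 2 3) lext_eq_sum_superset[where S = ?S])
       (auto simp: lookup_add cmul_add_left sum.distrib)
qed

lemma lext_cmul [simp]: "lext f (cmul c p) = cmul c (lext f p)"
  by (subst (1 2) lext_eq_sum_superset[where S = "Poly_Mapping.keys p"])
     (auto simp: cmul_sum intro: subsetD[OF keys_cmul_subset])

lemma lext_zero [simp]: "lext f 0 = 0"
  unfolding lext_def by simp

lemma lext_minus [simp]: "lext f (- p) = - lext f p"
  by (metis add_eq_0_iff2 lext_add lext_zero)

lemma lext_diff [simp]: "lext f (p - q) = lext f p - lext f q"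
  by (metis add_diff_cancel diff_add_cancel lext_add)

lemma lext_single [simp]: "lext f (Poly_Mapping.single k c) = cmul c (f k)"
  by (subst lext_eq_sum_superset[where S = "{k}"]) (auto simp: lookup_single)

lemma lext_sum: "lext f (sum g A) = (\<Sum>a\<in>A. lext f (g a))"
  by (induction A rule: infinite_finite_induct) auto

lemma lext_add_fun: "lext (\<lambda>x. f x + g x) p = lext f p + lext g p"
  and lext_diff_fun: "lext (\<lambda>x. f x - g x) p = lext f p - lext g p"
  and lext_minus_fun: "lext (\<lambda>x. - f x) p = - lext f p"
  and lext_cmul_fun: "lext (\<lambda>x. cmul c (f x)) p = cmul c (lext f p)"
  and lext_zero_fun: "lext (\<lambda>x. 0) p = 0"
  unfolding lext_def by (simp_all add: sum.distrib sum_subtractf sum_negf cmul_sum mult.commute)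

lemma lext_sum_fun: "lext (\<lambda>x. \<Sum>i\<in>A. h i x) p = (\<Sum>i\<in>A. lext (h i) p)"
  unfolding lext_def by (simp add: cmul_sum sum.swap[of _ A])

lemmas lext_linear_fun = lext_add_fun lext_diff_fun lext_minus_fun lext_cmul_fun

lemma lext_lext: "lext f (lext g p) = lext (\<lambda>x. lext f (g x)) p"
  by (subst (1 2) lext_def) (simp add: lext_sum)

lemma lext_lext_eqI:
  assumes "\<And>v. lext f (g v) = lext h (k v)"
  shows "lext f (lext g q) = lext h (lext k q)"
  by (simp add: lext_lext assms)

lemma lext_single_one: "lext (\<lambda>x. Poly_Mapping.single x 1) p = p"
proof (rule poly_mapping_eqI)
  fix k
  have "Poly_Mapping.lookup (lext (\<lambda>x. Poly_Mapping.single x 1) p) k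
      = (\<Sum>a\<in>Poly_Mapping.keys p. if a = k then Poly_Mapping.lookup p a else 0)"
    unfolding lext_def lookup_sum by (rule sum.cong) (simp_all add: lookup_single when_def)
  then show "Poly_Mapping.lookup (lext (\<lambda>x. Poly_Mapping.single x 1) p) k = Poly_Mapping.lookup p k"
    by (simp add: sum.delta' in_keys_iff)
qed

lemma lext_single_const: "lext (\<lambda>x. Poly_Mapping.single x c) p = cmul c p"
  using lext_cmul_fun[of c "\<lambda>x. Poly_Mapping.single x 1" p] by (simp add: lext_single_one)

lemma lext_lext_swap: "lext (\<lambda>x. lext (g x) q) p = lext (\<lambda>y. lext (\<lambda>x. g x y) p) q"
  unfolding lext_def by (simp add: cmul_sum sum.swap[of _ "Poly_Mapping.keys p"] mult.commute)

lemma poly_mapping_eq_sum_single: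
  "p = (\<Sum>k\<in>Poly_Mapping.keys p. cmul (Poly_Mapping.lookup p k) (Poly_Mapping.single k 1))"
  using lext_single_one[of p] unfolding lext_def by simp

lemma keys_sum_witness: "k \<in> Poly_Mapping.keys (sum f A) \<Longrightarrow> \<exists>a\<in>A. k \<in> Poly_Mapping.keys (f a)"
proof (induction A rule: infinite_finite_induct)
  case (insert x F)
  then show ?case using keys_add[of "f x" "sum f F"] by auto
qed auto

lemma keys_lext_witness:
  "k \<in> Poly_Mapping.keys (lext f p) \<Longrightarrow> \<exists>a\<in>Poly_Mapping.keys p. k \<in> Poly_Mapping.keys (f a)"
  unfolding lext_def by (auto dest!: keys_sum_witness dest: subsetD[OF keys_cmul_subset])

lemma lookup_tensor [simp]:
  "Poly_Mapping.lookup (tensor u v) k = Poly_Mapping.lookup u (fst k) * Poly_Mapping.lookup v (snd k)"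
proof -
  obtain a b where k: "k = (a, b)" by (cases k)
  have inner: "(\<Sum>q\<in>Poly_Mapping.keys v.
        Poly_Mapping.lookup u p * Poly_Mapping.lookup v q when (p, q) = (a, b))
      = (if p = a then Poly_Mapping.lookup u p * Poly_Mapping.lookup v b else 0)" for p
    by (auto simp: when_def in_keys_iff sum.delta')
  have "Poly_Mapping.lookup (tensor u v) k = (\<Sum>p\<in>Poly_Mapping.keys u. \<Sum>q\<in>Poly_Mapping.keys v.
        Poly_Mapping.lookup u p * Poly_Mapping.lookup v q when (p, q) = (a, b))"
    unfolding tensor_def k by (simp add: lookup_sum lookup_single)
  also have "\<dots> = Poly_Mapping.lookup u a * Poly_Mapping.lookup v b"
    by (simp only: inner) (auto simp: sum.delta' in_keys_iff)
  finally show ?thesis by (simp add: k)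
qed

lemma tensor_add_left [simp]: "tensor (p + p') v = tensor p v + tensor p' v"
  and tensor_add_right [simp]: "tensor u (q + q') = tensor u q + tensor u q'"
  and tensor_diff_left [simp]: "tensor (p - p') v = tensor p v - tensor p' v"
  and tensor_diff_right [simp]: "tensor u (q - q') = tensor u q - tensor u q'"
  and tensor_minus_left [simp]: "tensor (- p) v = - tensor p v"
  and tensor_cmul_left [simp]: "tensor (cmul c p) v = cmul c (tensor p v)"
  and tensor_cmul_right [simp]: "tensor u (cmul c q) = cmul c (tensor u q)"
  and tensor_zero_left [simp]: "tensor 0 v = 0"
  and tensor_zero_right [simp]: "tensor u 0 = 0"
  and tensor_single_single [simp]:
    "tensor (Poly_Mapping.single a c) (Poly_Mapping.single b d) = Poly_Mapping.single (a, b) (c * d)"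
  by (rule poly_mapping_eqI; auto simp: lookup_add lookup_minus lookup_single when_def algebra_simps)+

lemma tensor_sum_left: "tensor (sum f A) v = (\<Sum>a\<in>A. tensor (f a) v)"
  by (induction A rule: infinite_finite_induct) auto

lemma tensor_sum_right: "tensor u (sum g B) = (\<Sum>b\<in>B. tensor u (g b))"
  by (induction B rule: infinite_finite_induct) auto

lemma tensor_lext_left: "tensor (lext f p) v = lext (\<lambda>m. tensor (f m) v) p"
  and tensor_lext_right: "tensor u (lext g q) = lext (\<lambda>m. tensor u (g m)) q"
  unfolding lext_def by (simp_all add: tensor_sum_left tensor_sum_right)

lemma tensor_eq_lext_lext:
  "tensor p q = lext (\<lambda>a. lext (\<lambda>b. Poly_Mapping.single (a, b) 1) q) p"
proof -
  have "tensor p q = tensor (lext (\<lambda>x. Poly_Mapping.single x 1) p) (lext (\<lambda>x. Poly_Mapping.single x 1) q)"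
    by (simp add: lext_single_one)
  also have "\<dots> = lext (\<lambda>a. lext (\<lambda>b. Poly_Mapping.single (a, b) 1) q) p"
    by (simp add: tensor_lext_left tensor_lext_right) (rule lext_lext_swap)
  finally show ?thesis .
qed

lemma lext_tensor:
  "lext (\<lambda>(u, v). tensor (F u) (G v)) (tensor p q) = tensor (lext F p) (lext G q)"
  by (simp add: tensor_eq_lext_lext[of p q] lext_lext tensor_lext_left tensor_lext_right
      lext_lext_swap[of _ p q])

lemma sum_one_two: "(\<Sum>a\<in>{1, 2::nat}. f a) = f 1 + f 2"
  by simp

section \<open>Sets of odd indices\<close>

lemma UNIV_idx: "(UNIV :: idx set) = {J1, J2, J3, J4}"
  using idx.exhaust by auto

lemma finite_idx_set [simp]: "finite (I :: idx set)"
  by (rule finite_subset[OF subset_UNIV]) (simp add: UNIV_idx)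

lemma idx_set_eq_iff: "(A::idx set) = B \<longleftrightarrow>
    (J1 \<in> A \<longleftrightarrow> J1 \<in> B) \<and> (J2 \<in> A \<longleftrightarrow> J2 \<in> B) \<and> (J3 \<in> A \<longleftrightarrow> J3 \<in> B) \<and> (J4 \<in> A \<longleftrightarrow> J4 \<in> B)"
  by (auto simp: set_eq_iff) (metis idx.exhaust)+

lemma card_idx: "card (S :: idx set) = (if J1 \<in> S then 1 else 0) + (if J2 \<in> S then 1 else 0)
    + (if J3 \<in> S then 1 else 0) + (if J4 \<in> S then 1 else 0)"
proof -
  have "card S = sum (\<lambda>x. 1) ({J1, J2, J3, J4} \<inter> S)"
    by (simp flip: UNIV_idx)
  also have "\<dots> = sum (\<lambda>x. if x \<in> S then 1 else 0) {J1, J2, J3, J4}"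
    by (rule sum.inter_restrict) simp
  finally show ?thesis by simp
qed

lemma card_idx_pairs: "card (S :: (idx \<times> idx) set) =
    (\<Sum>a\<in>{J1, J2, J3, J4}. \<Sum>b\<in>{J1, J2, J3, J4}. if (a, b) \<in> S then 1 else 0)"
proof -
  have "(UNIV :: (idx \<times> idx) set) = {J1, J2, J3, J4} \<times> {J1, J2, J3, J4}"
    by (simp add: UNIV_idx flip: UNIV_Times_UNIV)
  then have "card S = sum (\<lambda>x. 1) (({J1, J2, J3, J4} \<times> {J1, J2, J3, J4}) \<inter> S)"
    by (simp only: Int_UNIV_left card_eq_sum)
  also have "\<dots> = sum (\<lambda>x. if x \<in> S then 1 else 0) ({J1, J2, J3, J4} \<times> {J1, J2, J3, J4})"
    by (rule sum.inter_restrict) simp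
  finally show ?thesis by (simp add: sum.cartesian_product split_def)
qed

lemma idx_set_cases: "(I :: idx set) \<in> {{}, {J1}, {J2}, {J3}, {J4}, {J1, J2}, {J1, J3}, {J1, J4},
    {J2, J3}, {J2, J4}, {J3, J4}, {J1, J2, J3}, {J1, J2, J4}, {J1, J3, J4}, {J2, J3, J4}, {J1, J2, J3, J4}}"
  by (cases "J1 \<in> I"; cases "J2 \<in> I"; cases "J3 \<in> I"; cases "J4 \<in> I") (simp_all add: idx_set_eq_iff)

section \<open>The Weyl-algebra operators on V_X\<close>

definition Dx :: "VX \<Rightarrow> nat \<Rightarrow> (mono \<Rightarrow>\<^sub>0 complex) \<Rightarrow> (mono \<Rightarrow>\<^sub>0 complex)" where
  "Dx X a q = lext (dx X a) q"

definition Dy :: "VX \<Rightarrow> nat \<Rightarrow> (mono \<Rightarrow>\<^sub>0 complex) \<Rightarrow> (mono \<Rightarrow>\<^sub>0 complex)" where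
  "Dy X b q = lext (dy X b) q"

definition Xop :: "VX \<Rightarrow> nat \<Rightarrow> nat \<Rightarrow> (mono \<Rightarrow>\<^sub>0 complex) \<Rightarrow> (mono \<Rightarrow>\<^sub>0 complex)" where
  "Xop X i j q = lext (xop X i j) q"

definition Yop :: "VX \<Rightarrow> nat \<Rightarrow> nat \<Rightarrow> (mono \<Rightarrow>\<^sub>0 complex) \<Rightarrow> (mono \<Rightarrow>\<^sub>0 complex)" where
  "Yop X i j q = lext (yop X i j) q"

lemma Dx_linear [simp]: "Dx X a (p + q) = Dx X a p + Dx X a q" "Dx X a (p - q) = Dx X a p - Dx X a q"
  "Dx X a (cmul c p) = cmul c (Dx X a p)" "Dx X a 0 = 0" "Dx X a (- p) = - Dx X a p"
  by (simp_all add: Dx_def)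

lemma Dy_linear [simp]: "Dy X b (p + q) = Dy X b p + Dy X b q" "Dy X b (p - q) = Dy X b p - Dy X b q"
  "Dy X b (cmul c p) = cmul c (Dy X b p)" "Dy X b 0 = 0" "Dy X b (- p) = - Dy X b p"
  by (simp_all add: Dy_def)

lemma Xop_linear [simp]: "Xop X i j (p + q) = Xop X i j p + Xop X i j q"
  "Xop X i j (p - q) = Xop X i j p - Xop X i j q"
  "Xop X i j (cmul c p) = cmul c (Xop X i j p)" "Xop X i j 0 = 0" "Xop X i j (- p) = - Xop X i j p"
  by (simp_all add: Xop_def)

lemma Yop_linear [simp]: "Yop X i j (p + q) = Yop X i j p + Yop X i j q"
  "Yop X i j (p - q) = Yop X i j p - Yop X i j q"
  "Yop X i j (cmul c p) = cmul c (Yop X i j p)" "Yop X i j 0 = 0" "Yop X i j (- p) = - Yop X i j p"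
  by (simp_all add: Yop_def)

lemmas monomial_op_defs = dx_def dy_def xop_def yop_def slot_op_def

lemma Dy_Dx_commute: "Dy X b (Dx X a q) = Dx X a (Dy X b q)"
  and Dy_Xop_commute: "Dy X b (Xop X i j q) = Xop X i j (Dy X b q)"
  and Yop_Dx_commute: "Yop X i j (Dx X a q) = Dx X a (Yop X i j q)"
  and Dx_Dx_commute: "Dx X 2 (Dx X 1 q) = Dx X 1 (Dx X 2 q)"
  and Dy_Dy_commute: "Dy X 2 (Dy X 1 q) = Dy X 1 (Dy X 2 q)"
  unfolding Dx_def Dy_def Xop_def Yop_def
  by (rule lext_lext_eqI, case_tac v rule: prod_cases4, auto simp: monomial_op_defs algebra_simps)+

lemma Dx_Xop_commutator:
  assumes "i \<in> {1, 2}" "j \<in> {1, 2}" "a \<in> {1, 2}"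
  shows "Dx X a (Xop X i j q) = Xop X i j (Dx X a q) + (if i = a then Dx X j q else 0)"
proof -
  have "lext (dx X a) (xop X i j v) = lext (xop X i j) (dx X a v) + (if i = a then dx X j v else 0)" for v
  proof -
    obtain a1 a2 c1 c2 where v: "v = (a1, a2, c1, c2)" by (cases v) auto
    show ?thesis using assms unfolding v
      by (cases a1; cases a2) (auto simp: monomial_op_defs single_add[symmetric] algebra_simps)
  qed
  then show ?thesis
    unfolding Dx_def Xop_def lext_lext by (cases "i = a") (simp_all add: lext_add_fun lext_zero_fun)
qed

lemma Dy_Yop_commutator:
  assumes "i \<in> {1, 2}" "j \<in> {1, 2}" "b \<in> {1, 2}"
  shows "Dy X b (Yop X i j q) = Yop X i j (Dy X b q) + (if i = b then Dy X j q else 0)"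
proof -
  have "lext (dy X b) (yop X i j v) = lext (yop X i j) (dy X b v) + (if i = b then dy X j v else 0)" for v
  proof -
    obtain a1 a2 c1 c2 where v: "v = (a1, a2, c1, c2)" by (cases v) auto
    show ?thesis using assms unfolding v
      by (cases c1; cases c2) (auto simp: monomial_op_defs single_add[symmetric] algebra_simps)
  qed
  then show ?thesis
    unfolding Dy_def Yop_def lext_lext by (cases "i = b") (simp_all add: lext_add_fun lext_zero_fun)
qed

(* Normal ordering puts the multiplication operators outermost; on a dual slot d_(x_a) is itself
   a multiplication operator, which reverses the orientation. *)
lemma Dx_Xop_normalize:
  "\<not> xdual X \<Longrightarrow> i \<in> {1, 2} \<Longrightarrow> j \<in> {1, 2} \<Longrightarrow> a \<in> {1, 2} \<Longrightarrow>
    Dx X a (Xop X i j q) = Xop X i j (Dx X a q) + (if i = a then Dx X j q else 0)"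
  and Xop_Dx_normalize:
  "xdual X \<Longrightarrow> i \<in> {1, 2} \<Longrightarrow> j \<in> {1, 2} \<Longrightarrow> a \<in> {1, 2} \<Longrightarrow>
    Xop X i j (Dx X a q) = Dx X a (Xop X i j q) - (if i = a then Dx X j q else 0)"
  and Dy_Yop_normalize:
  "\<not> ydual X \<Longrightarrow> i \<in> {1, 2} \<Longrightarrow> j \<in> {1, 2} \<Longrightarrow> a \<in> {1, 2} \<Longrightarrow>
    Dy X a (Yop X i j q) = Yop X i j (Dy X a q) + (if i = a then Dy X j q else 0)"
  and Yop_Dy_normalize:
  "ydual X \<Longrightarrow> i \<in> {1, 2} \<Longrightarrow> j \<in> {1, 2} \<Longrightarrow> a \<in> {1, 2} \<Longrightarrow>
    Yop X i j (Dy X a q) = Dy X a (Yop X i j q) - (if i = a then Dy X j q else 0)"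
  by (simp_all add: Dx_Xop_commutator Dy_Yop_commutator)

lemma Xop_Dx_exchange:
  "\<not> xdual X \<Longrightarrow> i \<in> {1, 2} \<Longrightarrow> Xop X i 2 (Dx X 1 q) = Xop X i 1 (Dx X 2 q)"
  and Dx_Xop_exchange:
  "xdual X \<Longrightarrow> i \<in> {1, 2} \<Longrightarrow> Dx X 1 (Xop X i 2 q) = Dx X 2 (Xop X i 1 q)"
  and Yop_Dy_exchange:
  "\<not> ydual X \<Longrightarrow> i \<in> {1, 2} \<Longrightarrow> Yop X i 2 (Dy X 1 q) = Yop X i 1 (Dy X 2 q)"
  and Dy_Yop_exchange:
  "ydual X \<Longrightarrow> i \<in> {1, 2} \<Longrightarrow> Dy X 1 (Yop X i 2 q) = Dy X 2 (Yop X i 1 q)"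
  unfolding Dx_def Dy_def Xop_def Yop_def
  by (rule lext_lext_eqI, case_tac v rule: prod_cases4,
      auto simp: monomial_op_defs algebra_simps split: nat_diff_split)+

lemmas weyl_normalize = Dx_Xop_normalize Xop_Dx_normalize Dy_Yop_normalize Yop_Dy_normalize
  Xop_Dx_exchange Dx_Xop_exchange Yop_Dy_exchange Dy_Yop_exchange
  Xop_Dx_exchange[unfolded One_nat_def] Dx_Xop_exchange[unfolded One_nat_def]
  Yop_Dy_exchange[unfolded One_nat_def] Dy_Yop_exchange[unfolded One_nat_def]
  Dy_Dx_commute Dy_Xop_commute Yop_Dx_commute xdual_def ydual_def

lemma single_Ex_eq_xop: "Poly_Mapping.single v (of_int (Ex X v)) = xop X 1 1 v + xop X 2 2 v"
  and single_Ey_eq_yop: "Poly_Mapping.single v (of_int (Ey X v)) = yop X 1 1 v + yop X 2 2 v"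
  by (cases v rule: prod_cases4; auto simp: monomial_op_defs Ex_def Ey_def single_add[symmetric])+

definition G0 :: "VX \<Rightarrow> gb \<Rightarrow> (mono \<Rightarrow>\<^sub>0 complex) \<Rightarrow> (mono \<Rightarrow>\<^sub>0 complex)" where
  "G0 X b q = lext (g0act X b) q"

lemma G0_Cb: "G0 X Cb q =
    cmul (1/2) (Xop X 1 1 q + Xop X 2 2 q - Yop X 1 1 q - Yop X 2 2 q) + cmul (of_int (jX X)) q"
proof -
  have "g0act X Cb v = cmul (1/2) (Poly_Mapping.single v (of_int (Ex X v))
      - Poly_Mapping.single v (of_int (Ey X v))) + Poly_Mapping.single v (of_int (jX X))" for v
    by (simp add: g0act_def single_add[symmetric] single_diff[symmetric] diff_divide_distrib)
  then have "g0act X Cb = (\<lambda>v. cmul (1/2) (xop X 1 1 v + xop X 2 2 v - yop X 1 1 v - yop X 2 2 v)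
      + Poly_Mapping.single v (of_int (jX X)))"
    by (simp add: fun_eq_iff single_Ex_eq_xop single_Ey_eq_yop)
  then show ?thesis
    unfolding G0_def Xop_def Yop_def by (simp only: lext_linear_fun lext_single_const)
qed

(* Stated with premises m = 1 and I = ... so that the rules also fire on Kb (Suc 0) {} and on any
   other representation of the index set the simplifier produces; idx_set_eq_iff discharges them. *)
lemma G0_Kb1_empty: "m = 1 \<Longrightarrow> I = {} \<Longrightarrow> G0 X (Kb m I) q =
    cmul (-1/2) (Xop X 1 1 q + Xop X 2 2 q + Yop X 1 1 q + Yop X 2 2 q) + cmul (of_int (iX X)) q"
proof -
  have "g0act X (Kb 1 {}) v = cmul (-1/2) (Poly_Mapping.single v (of_int (Ex X v))
      + Poly_Mapping.single v (of_int (Ey X v))) + Poly_Mapping.single v (of_int (iX X))" for v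
    by (simp add: g0act_def single_add[symmetric] add_divide_distrib diff_divide_distrib)
  then have "g0act X (Kb 1 {}) = (\<lambda>v. cmul (-1/2) (xop X 1 1 v + xop X 2 2 v + yop X 1 1 v
      + yop X 2 2 v) + Poly_Mapping.single v (of_int (iX X)))"
    by (simp add: fun_eq_iff single_Ex_eq_xop single_Ey_eq_yop)
  then show "m = 1 \<Longrightarrow> I = {} \<Longrightarrow> ?thesis"
    unfolding G0_def Xop_def Yop_def by (simp only: lext_linear_fun lext_single_const)
qed

lemma G0_Kb0_pair:
  "I = {J1, J2} \<Longrightarrow> G0 X (Kb 0 I) q = cmul (\<i>/2) (Xop X 1 1 q - Xop X 2 2 q + Yop X 1 1 q - Yop X 2 2 q)"
  "I = {J3, J4} \<Longrightarrow> G0 X (Kb 0 I) q = cmul (- \<i>/2) (Xop X 1 1 q - Xop X 2 2 q - Yop X 1 1 q + Yop X 2 2 q)"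
  "I = {J1, J3} \<Longrightarrow> G0 X (Kb 0 I) q = cmul (1/2) (Xop X 2 1 q - Xop X 1 2 q + Yop X 2 1 q - Yop X 1 2 q)"
  "I = {J2, J4} \<Longrightarrow> G0 X (Kb 0 I) q = cmul (1/2) (Xop X 2 1 q - Xop X 1 2 q - Yop X 2 1 q + Yop X 1 2 q)"
  "I = {J2, J3} \<Longrightarrow> G0 X (Kb 0 I) q = cmul (- \<i>/2) (Xop X 1 2 q + Xop X 2 1 q + Yop X 1 2 q + Yop X 2 1 q)"
  "I = {J1, J4} \<Longrightarrow> G0 X (Kb 0 I) q = cmul (- \<i>/2) (Yop X 1 2 q + Yop X 2 1 q - Xop X 1 2 q - Xop X 2 1 q)"
  unfolding G0_def Xop_def Yop_def
  by (simp_all (no_asm_simp) add: g0act_def[abs_def] e_x_def f_x_def h_x_def e_y_def f_y_def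
      h_y_def idx_set_eq_iff lext_linear_fun)

lemmas G0_simps = G0_Cb G0_Kb1_empty G0_Kb0_pair

section \<open>Right multiplication in U(g_<0)\<close>

definition Theta :: "ub \<Rightarrow> (ub \<Rightarrow>\<^sub>0 complex)" where
  "Theta u = Poly_Mapping.single (fst u + 1, snd u) 1"

lemmas eta_mult_simps = lmul_eta_def rmul_eta_def Theta_def Let_def card_idx insert_Diff_if

lemma rmul_eta_anticommute:
  "lext (rmul_eta j) (rmul_eta i u) + lext (rmul_eta i) (rmul_eta j u) =
     (if i = j then - Theta u else 0)"
  using idx_set_cases[of "snd u"]
  by (cases u; cases i; cases j; simp; elim disjE;
      simp add: eta_mult_simps insert_commute single_add[symmetric] single_uminus[symmetric])

lemma lmul_rmul_eta_assoc: "lext (lmul_eta i) (rmul_eta j u) = lext (rmul_eta j) (lmul_eta i u)"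
  using idx_set_cases[of "snd u"]
  by (cases u; cases i; cases j; simp; elim disjE;
      simp add: eta_mult_simps insert_commute single_add[symmetric])

lemma rmul_eta_square: "lext (rmul_eta i) (rmul_eta i u) = - cmul (1/2) (Theta u)"
proof (rule poly_mapping_eqI)
  fix k
  have "2 * Poly_Mapping.lookup (lext (rmul_eta i) (rmul_eta i u)) k = - Poly_Mapping.lookup (Theta u) k"
    using arg_cong[OF rmul_eta_anticommute[of i i u], of "\<lambda>p. Poly_Mapping.lookup p k"]
    by (simp add: lookup_add)
  then show "Poly_Mapping.lookup (lext (rmul_eta i) (rmul_eta i u)) k
      = Poly_Mapping.lookup (- cmul (1/2) (Theta u)) k"
    by (simp add: field_simps)
qed

lemma rmul_eta_swap:
  "i \<noteq> j \<Longrightarrow> lext (rmul_eta i) (rmul_eta j u) = - lext (rmul_eta j) (rmul_eta i u)"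
  using rmul_eta_anticommute[of i j u] by (simp add: eq_neg_iff_add_eq_0 add.commute)

lemma rmul_w_eq: "rmul_w a b = (if a = 1 \<and> b = 1 then (\<lambda>u. rmul_eta J2 u + cmul \<i> (rmul_eta J1 u))
    else if a = 2 \<and> b = 2 then (\<lambda>u. rmul_eta J2 u - cmul \<i> (rmul_eta J1 u))
    else if a = 1 \<and> b = 2 then (\<lambda>u. - rmul_eta J4 u + cmul \<i> (rmul_eta J3 u))
    else (\<lambda>u. rmul_eta J4 u + cmul \<i> (rmul_eta J3 u)))"
  by (auto simp: fun_eq_iff rmul_w_def)

definition rmul_ww :: "nat \<Rightarrow> nat \<Rightarrow> nat \<Rightarrow> nat \<Rightarrow> ub \<Rightarrow> (ub \<Rightarrow>\<^sub>0 complex)" where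
  "rmul_ww a b c d u = lext (rmul_w c d) (rmul_w a b u)"

lemmas rmul_ww_expand = rmul_ww_def rmul_w_eq lext_linear_fun lext_add lext_diff lext_minus lext_cmul
  rmul_eta_square rmul_eta_swap[of J2 J1] rmul_eta_swap[of J3 J1] rmul_eta_swap[of J4 J1]
  rmul_eta_swap[of J3 J2] rmul_eta_swap[of J4 J2] rmul_eta_swap[of J4 J3]

lemma rmul_ww_anticommute:
  assumes "a \<in> {1, 2}" "b \<in> {1, 2}" "c \<in> {1, 2}" "d \<in> {1, 2}" "a = c \<or> b = d"
  shows "rmul_ww c d a b u = - rmul_ww a b c d u"
  using assms by (elim insertE emptyE disjE; simp add: rmul_ww_expand)

lemma rmul_ww_square:
  assumes "a \<in> {1, 2}" "b \<in> {1, 2}"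
  shows "rmul_ww a b a b u = 0"
  using assms by (elim insertE emptyE; simp add: rmul_ww_expand)

lemma rmul_ww_anticommutators_cancel:
  "rmul_ww 1 1 2 2 u + rmul_ww 2 2 1 1 u + rmul_ww 1 2 2 1 u + rmul_ww 2 1 1 2 u = 0"
  by (simp add: rmul_ww_expand)

lemma rmul_w_Theta: "lext (rmul_w a b) (Theta u) = lext Theta (rmul_w a b u)"
proof -
  have "lext (rmul_eta j) (Theta u) = lext Theta (rmul_eta j u)" for j
    by (cases u) (simp add: rmul_eta_def Theta_def Let_def)
  then show ?thesis by (simp add: rmul_w_eq lext_linear_fun)
qed

lemma rmul_w_lmul_eta: "lext (rmul_w a b) (lmul_eta i u) = lext (lmul_eta i) (rmul_w a b u)"
  by (simp add: rmul_w_eq lmul_rmul_eta_assoc lext_linear_fun)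

section \<open>The operator nabla\<close>

lemma nabla_linear [simp]:
  "nabla X (x + y) = nabla X x + nabla X y" "nabla X (x - y) = nabla X x - nabla X y"
  "nabla X (cmul c x) = cmul c (nabla X x)" "nabla X 0 = 0"
  by (simp_all add: nabla_def)

lemma nabla_sum: "nabla X (sum f A) = (\<Sum>a\<in>A. nabla X (f a))"
  by (simp add: nabla_def lext_sum)

lemma nabla_tensor: "nabla X (tensor p q) =
    (\<Sum>a\<in>{1, 2}. \<Sum>b\<in>{1, 2}. tensor (lext (rmul_w a b) p) (Dy X b (Dx X a q)))"
proof -
  have "nabla X = lext (\<lambda>k. \<Sum>a\<in>{1, 2}. \<Sum>b\<in>{1, 2}.
      (\<lambda>(u, v). tensor (rmul_w a b u) (lext (dy X b) (dx X a v))) k)"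
    unfolding nabla_def by (simp add: case_prod_beta')
  then show ?thesis
    by (simp only: lext_sum_fun lext_tensor Dx_def Dy_def lext_lext)
qed

lemma nabla_single: "nabla X (Poly_Mapping.single (u, v) 1) =
    (\<Sum>a\<in>{1, 2}. \<Sum>b\<in>{1, 2}. tensor (rmul_w a b u) (Dy X b (Dx X a (Poly_Mapping.single v 1))))"
  using nabla_tensor[of X "Poly_Mapping.single u 1" "Poly_Mapping.single v 1"] by simp

lemma nabla_nabla_single: "nabla X (nabla X (Poly_Mapping.single (u, v) 1)) = 0"
proof -
  have anticommute: "rmul_ww 1 2 1 1 u = - rmul_ww 1 1 1 2 u" "rmul_ww 2 1 1 1 u = - rmul_ww 1 1 2 1 u"
    "rmul_ww 1 2 2 2 u = - rmul_ww 2 2 1 2 u" "rmul_ww 2 1 2 2 u = - rmul_ww 2 2 2 1 u"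
    by (rule rmul_ww_anticommute; simp)+
  have square: "rmul_ww 1 1 1 1 u = 0" "rmul_ww 2 2 2 2 u = 0" "rmul_ww 1 2 1 2 u = 0"
    "rmul_ww 2 1 2 1 u = 0"
    by (rule rmul_ww_square; simp)+
  have cancel: "rmul_ww 2 1 1 2 u = - rmul_ww 1 1 2 2 u - rmul_ww 2 2 1 1 u - rmul_ww 1 2 2 1 u"
    using rmul_ww_anticommutators_cancel[of u] by (simp add: eq_diff_eq eq_neg_iff_add_eq_0 ac_simps)
  show ?thesis
    by (simp only: nabla_single nabla_sum nabla_linear nabla_tensor sum_one_two lext_single cmul_one)
       (simp only: rmul_ww_def[symmetric] Dy_Dx_commute Dx_Dx_commute Dy_Dy_commute anticommute
          square cancel,
        rule poly_mapping_eqI, simp add: lookup_add lookup_minus)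
qed

lemma nabla_nabla: "nabla X (nabla X x) = 0"
proof -
  have "nabla X (nabla X x) = lext (\<lambda>k. nabla X (nabla X (Poly_Mapping.single k 1))) x"
    by (simp add: nabla_def lext_lext)
  also have "\<dots> = lext (\<lambda>k. 0) x"
    by (rule arg_cong[where f = "\<lambda>f. lext f x"]) (simp add: fun_eq_iff nabla_nabla_single)
  also have "\<dots> = 0"
    by (rule lext_zero_fun)
  finally show ?thesis .
qed

lemma keys_dx: "k \<in> Poly_Mapping.keys (dx X a v) \<Longrightarrow> Ex X k = Ex X v - 1 \<and> Ey X k = Ey X v"
  and keys_dy: "k \<in> Poly_Mapping.keys (dy X b v) \<Longrightarrow> Ex X k = Ex X v \<and> Ey X k = Ey X v - 1"
  by (cases v rule: prod_cases4; auto simp: dx_def dy_def Ex_def Ey_def split: if_splits nat_diff_split)+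

lemma nabla_Mspace: "x \<in> Mspace X m n \<Longrightarrow> nabla X x \<in> Mspace X (m - 1) (n - 1)"
  unfolding Mspace_def
proof (intro CollectI ballI)
  fix k assume x: "x \<in> {x. \<forall>k\<in>Poly_Mapping.keys x. Ex X (snd k) = m \<and> Ey X (snd k) = n}"
    and k: "k \<in> Poly_Mapping.keys (nabla X x)"
  from k obtain u v where uv: "(u, v) \<in> Poly_Mapping.keys x" and
    "k \<in> Poly_Mapping.keys (\<Sum>a\<in>{1, 2}. \<Sum>b\<in>{1, 2}. tensor (rmul_w a b u) (lext (dy X b) (dx X a v)))"
    unfolding nabla_def by (auto dest!: keys_lext_witness)
  then obtain a b where "k \<in> Poly_Mapping.keys (tensor (rmul_w a b u) (lext (dy X b) (dx X a v)))"
    by (blast dest: keys_sum_witness)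
  then have "snd k \<in> Poly_Mapping.keys (lext (dy X b) (dx X a v))"
    by (cases k) (simp add: in_keys_iff)
  then obtain v' where "v' \<in> Poly_Mapping.keys (dx X a v)" "snd k \<in> Poly_Mapping.keys (dy X b v')"
    by (auto dest!: keys_lext_witness)
  then have "Ex X (snd k) = Ex X v - 1 \<and> Ey X (snd k) = Ey X v - 1"
    by (auto dest!: keys_dx keys_dy)
  moreover have "Ex X v = m \<and> Ey X v = n" using x uv by auto
  ultimately show "Ex X (snd k) = m - 1 \<and> Ey X (snd k) = n - 1" by simp
qed

lemma single_Mspace: "Poly_Mapping.single ((0, {}), v) 1 \<in> Mspace X (Ex X v) (Ey X v)"
  unfolding Mspace_def by simp

lemma nabla_single_nonzero:
  assumes "xdual X \<or> 1 \<le> m" "ydual X \<or> 1 \<le> n"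
  shows "nabla X (Poly_Mapping.single ((0, {}), (m, 0, n, 0)) 1) \<noteq> 0"
proof -
  let ?a = "if xdual X then m + 1 else m - 1" and ?c = "if ydual X then n + 1 else n - 1"
  \<comment> \<open>only the summand of w_11 and d_(x_1) d_(y_1) contributes to this coefficient\<close>
  have "Poly_Mapping.lookup (nabla X (Poly_Mapping.single ((0, {}), (m, 0, n, 0)) 1))
      ((0, {J2}), (?a, 0, ?c, 0)) \<noteq> 0"
    using assms
    by (simp add: nabla_single Dx_def Dy_def dx_def dy_def rmul_w_def rmul_eta_def Let_def
        lookup_add lookup_minus lookup_single when_def) auto
  then show ?thesis by auto
qed

lemma nabla_nonzero_in_Mspace:
  assumes "xdual X \<or> 1 \<le> m" "ydual X \<or> 1 \<le> n"
  shows "\<exists>x \<in> Mspace X (Ex X (m, 0, n, 0)) (Ey X (m, 0, n, 0)). nabla X x \<noteq> 0"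
  using single_Mspace nabla_single_nonzero[OF assms] by blast

section \<open>Brackets with the odd generators\<close>

lemma gsign_eq: "gsign I J = (if I \<inter> J \<noteq> {} then 0 else (-1) ^ (\<Sum>a\<in>{J1, J2, J3, J4}.
    \<Sum>b\<in>{J1, J2, J3, J4}. if a \<in> I \<and> b \<in> J \<and> ordi b < ordi a then 1 else 0))"
  unfolding gsign_def by (subst card_idx_pairs) simp

lemma psi_eta: "psi m I 0 {j} = (if m = 0 \<and> I = allidx - {j} then - fst (dxi j allidx) else 0)"
proof -
  have "{j} \<noteq> allidx" "\<not> (\<exists>i. I = {i} \<and> {j} = allidx - {i})"
    by (cases j; auto simp: allidx_def idx_set_eq_iff; metis idx.exhaust)+
  moreover have "(\<exists>i. {j} = {i} \<and> I = allidx - {i}) \<longleftrightarrow> I = allidx - {j}"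
    by auto
  ultimately show ?thesis
    unfolding psi_def by auto
qed

lemmas bracket_simps = gbr.simps kbr_def psi_eta gsign_eq dxi_def allidx_def card_idx insert_Diff_if

lemma gdeg_Kb_eta_bracket:
  assumes c: "c \<in> Poly_Mapping.keys (gbr (Kb m I) (Kb 0 {j}))" and deg: "2 \<le> gdeg (Kb m I)"
  shows "gdeg c = gdeg (Kb m I) - 1"
proof -
  have "\<not> (m = 0 \<and> I = allidx - {j})"
    using deg by (cases j) (auto simp: allidx_def card_idx)
  then have "psi m I 0 {j} = 0"
    by (simp only: psi_eta if_False)
  then have ck: "c \<in> Poly_Mapping.keys (kbr m I 0 {j})"
    using c by simp
  let ?A = "Poly_Mapping.single (Kb (m + 0 - 1) (I \<union> {j}))
    (((2 - of_nat (card I)) * of_nat 0 - of_nat m * (2 - of_nat (card {j}))) * gsign I {j})"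
  let ?B = "\<Sum>i\<in>allidx. Poly_Mapping.single (Kb (m + 0) (snd (dxi i I) \<union> snd (dxi i {j})))
    (fst (dxi i I) * fst (dxi i {j}) * gsign (snd (dxi i I)) (snd (dxi i {j})))"
  have "kbr m I 0 {j} = ?A + cmul ((-1) ^ card I) ?B"
    unfolding kbr_def by simp
  with ck have "c \<in> Poly_Mapping.keys (?A + cmul ((-1) ^ card I) ?B)"
    by (simp only:)
  then have "c \<in> Poly_Mapping.keys ?A \<or> c \<in> Poly_Mapping.keys ?B"
    using keys_add[of ?A "cmul ((-1) ^ card I) ?B"] keys_cmul_subset[of "(-1) ^ card I" ?B] by blast
  then show ?thesis
  proof
    assume "c \<in> Poly_Mapping.keys ?A"
    then have "c = Kb (m - 1) (I \<union> {j})" "m \<noteq> 0" "j \<notin> I"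
      by (auto simp: gsign_def split: if_splits)
    then show ?thesis by simp
  next
    assume "c \<in> Poly_Mapping.keys ?B"
    then obtain i where "c \<in> Poly_Mapping.keys (Poly_Mapping.single
        (Kb m (snd (dxi i I) \<union> snd (dxi i {j})))
        (fst (dxi i I) * fst (dxi i {j}) * gsign (snd (dxi i I)) (snd (dxi i {j}))))"
      by (auto dest: keys_sum_witness)
    then have "c = Kb m (I - {j})" "j \<in> I"
      by (auto simp: dxi_def split: if_splits)
    then show ?thesis
      using card_Diff1_less[of I j] by (simp add: card_Diff_singleton)
  qed
qed

lemma gdeg_eq_0_cases:
  "gdeg b = 0 \<Longrightarrow> b \<in> {Cb, Kb 1 {}, Kb 0 {J1, J2}, Kb 0 {J1, J3}, Kb 0 {J1, J4},
     Kb 0 {J2, J3}, Kb 0 {J2, J4}, Kb 0 {J3, J4}}"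
proof (cases b)
  case (Kb m I)
  then show "gdeg b = 0 \<Longrightarrow> ?thesis"
    using idx_set_cases[of I] by (elim insertE emptyE; simp add: card_idx; presburger)
qed simp

lemma gdeg_eq_1_cases:
  "gdeg b = 1 \<Longrightarrow> b \<in> {Kb 1 {J1}, Kb 1 {J2}, Kb 1 {J3}, Kb 1 {J4},
     Kb 0 {J1, J2, J3}, Kb 0 {J1, J2, J4}, Kb 0 {J1, J3, J4}, Kb 0 {J2, J3, J4}}"
proof (cases b)
  case (Kb m I)
  then show "gdeg b = 1 \<Longrightarrow> ?thesis"
    using idx_set_cases[of I] by (elim insertE emptyE; simp add: card_idx; presburger)
qed simp

lemma gdeg_neg_cases: "gdeg b < 0 \<Longrightarrow> b = Kb 0 {} \<or> (\<exists>j. b = Kb 0 {j})"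
proof (cases b)
  case (Kb m I)
  then show "gdeg b < 0 \<Longrightarrow> ?thesis"
    using idx_set_cases[of I] by (elim insertE emptyE; simp add: card_idx; presburger)
qed simp

section \<open>Equivariance\<close>

definition utensor :: "ub \<Rightarrow> (mono \<Rightarrow>\<^sub>0 complex) \<Rightarrow> melt" where
  "utensor u q = tensor (Poly_Mapping.single u 1) q"

lemma utensor_linear [simp]:
  "utensor u (p + q) = utensor u p + utensor u q" "utensor u (p - q) = utensor u p - utensor u q"
  "utensor u (cmul c p) = cmul c (utensor u p)" "utensor u 0 = 0"
  by (simp_all add: utensor_def)

lemma tensor_single_eq_utensor: "tensor (Poly_Mapping.single u c) q = cmul c (utensor u q)"
  unfolding utensor_def by (metis cmul_single mult.right_neutral tensor_cmul_left)

lemma utensor_eq_lext: "utensor u q = lext (\<lambda>v. Poly_Mapping.single (u, v) 1) q"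
  unfolding utensor_def by (subst (1) lext_single_one[symmetric]) (simp add: tensor_lext_right)

lemma lookup_utensor: "Poly_Mapping.lookup (utensor u q) k = of_bool (u = fst k) * Poly_Mapping.lookup q (snd k)"
  by (simp add: utensor_def lookup_single when_def)

lemma nabla_utensor: "nabla X (utensor u q) =
    (\<Sum>a\<in>{1, 2}. \<Sum>b\<in>{1, 2}. tensor (rmul_w a b u) (Dy X b (Dx X a q)))"
  unfolding utensor_def by (simp add: nabla_tensor)

lemma gact_eq_lext: "gact rho z x = lext (\<lambda>c. rho c x) z"
  unfolding gact_def lext_def by simp

lemma gact_simps [simp]:
  "gact rho (z1 + z2) x = gact rho z1 x + gact rho z2 x"
  "gact rho (z1 - z2) x = gact rho z1 x - gact rho z2 x"
  "gact rho (cmul a z) x = cmul a (gact rho z x)"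
  "gact rho (Poly_Mapping.single c a) x = cmul a (rho c x)"
  "gact rho 0 x = 0"
  by (simp_all add: gact_eq_lext)

lemma gact_eq_zero: "(\<And>c. c \<in> Poly_Mapping.keys z \<Longrightarrow> rho c x = 0) \<Longrightarrow> gact rho z x = 0"
  unfolding gact_def by (simp add: sum.neutral)

locale induced_module =
  fixes X :: VX and rho :: "gb \<Rightarrow> melt \<Rightarrow> melt"
  assumes induced: "induced_rep X rho"
begin

lemma rho_add [simp]: "rho b (x + y) = rho b x + rho b y"
  using induced unfolding induced_rep_def by meson

lemma rho_cmul [simp]: "rho b (cmul c x) = cmul c (rho b x)"
  using induced unfolding induced_rep_def by meson

lemma rho_supercommutator: "rho b1 (rho b2 x) -
    cmul ((-1) ^ (par b1 * par b2)) (rho b2 (rho b1 x)) = gact rho (gbr b1 b2) x"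
  using induced unfolding induced_rep_def by meson

lemma rho_Theta: "rho (Kb 0 {}) (Poly_Mapping.single (u, v) 1) =
    Poly_Mapping.single ((fst u + 1, snd u), v) 1"
  using induced unfolding induced_rep_def by meson

lemma rho_eta: "rho (Kb 0 {i}) (Poly_Mapping.single (u, v) 1) =
    tensor (lmul_eta i u) (Poly_Mapping.single v 1)"
  using induced unfolding induced_rep_def by meson

lemma rho_deg0: "gdeg b = 0 \<Longrightarrow> rho b (Poly_Mapping.single ((0, {}), v) 1) =
    tensor (Poly_Mapping.single (0, {}) 1) (g0act X b v)"
  using induced unfolding induced_rep_def by meson

lemma rho_pos: "0 < gdeg b \<Longrightarrow> rho b (Poly_Mapping.single ((0, {}), v) 1) = 0"
  using induced unfolding induced_rep_def by meson

lemma rho_bracket: "rho b1 (rho b2 x) =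
    cmul ((-1) ^ (par b1 * par b2)) (rho b2 (rho b1 x)) + gact rho (gbr b1 b2) x"
  using rho_supercommutator[of b1 b2 x] unfolding diff_eq_eq by (simp only: add.commute)

lemma rho_zero [simp]: "rho b 0 = 0"
  using rho_cmul[of b 0 0] by simp

lemma rho_minus [simp]: "rho b (- x) = - rho b x"
  by (metis add_eq_0_iff2 rho_add rho_zero)

lemma rho_diff [simp]: "rho b (x - y) = rho b x - rho b y"
  by (metis add_diff_cancel diff_add_cancel rho_add)

lemma rho_sum: "rho b (sum f A) = (\<Sum>a\<in>A. rho b (f a))"
  by (induction A rule: infinite_finite_induct) auto

lemma rho_lext: "rho b (lext f p) = lext (\<lambda>a. rho b (f a)) p"
  unfolding lext_def by (simp add: rho_sum)

lemma rho_utensor: "rho b (utensor u q) = lext (\<lambda>v. rho b (Poly_Mapping.single (u, v) 1)) q"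
  unfolding utensor_eq_lext by (simp only: rho_lext)

lemma rho_deg0_utensor:
  assumes "gdeg b = 0"
  shows "rho b (utensor (0, {}) q) = utensor (0, {}) (G0 X b q)"
proof -
  have "rho b (utensor (0, {}) q) = lext (\<lambda>v. tensor (Poly_Mapping.single (0, {}) 1) (g0act X b v)) q"
    by (simp only: rho_utensor rho_deg0[OF assms])
  also have "\<dots> = utensor (0, {}) (G0 X b q)"
    by (simp only: tensor_lext_right[symmetric] utensor_def G0_def)
  finally show ?thesis .
qed

lemma rho_pos_utensor: "0 < gdeg b \<Longrightarrow> rho b (utensor (0, {}) q) = 0"
  by (simp add: rho_utensor rho_pos lext_zero_fun)

lemma rho_eta_utensor: "rho (Kb 0 {j}) (utensor (0, {}) q) = utensor (0, {j}) q"
proof -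
  have "rho (Kb 0 {j}) (utensor (0, {}) q) =
      lext (\<lambda>v. tensor (Poly_Mapping.single (0, {j}) 1) (Poly_Mapping.single v 1)) q"
    by (simp add: rho_utensor rho_eta lmul_eta_def)
  also have "\<dots> = utensor (0, {j}) q"
    by (simp only: tensor_lext_right[symmetric] lext_single_one utensor_def)
  finally show ?thesis .
qed

lemma rho_utensor_eta: "rho b (utensor (0, {j}) q) =
    cmul ((-1) ^ par b) (rho (Kb 0 {j}) (rho b (utensor (0, {}) q)))
    + gact rho (gbr b (Kb 0 {j})) (utensor (0, {}) q)"
  using rho_bracket[of b "Kb 0 {j}" "utensor (0, {}) q"] by (simp add: rho_eta_utensor)

lemma rho_left_mult_tensor:
  assumes "\<And>u v. rho c (Poly_Mapping.single (u, v) 1) = tensor (F u) (Poly_Mapping.single v 1)"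
  shows "rho c (tensor p q) = tensor (lext F p) q"
proof -
  have "rho c (tensor p q) = lext (\<lambda>u. lext (\<lambda>v. tensor (F u) (Poly_Mapping.single v 1)) q) p"
    by (simp only: tensor_eq_lext_lext[of p q] rho_lext assms)
  also have "\<dots> = tensor (lext F p) q"
    by (simp only: tensor_lext_right[symmetric] lext_single_one tensor_lext_left)
  finally show ?thesis .
qed

lemma nabla_rho_left_mult:
  assumes rho_c: "\<And>u v. rho c (Poly_Mapping.single (u, v) 1) = tensor (F u) (Poly_Mapping.single v 1)"
    and F_rmul_w: "\<And>a b u. lext (rmul_w a b) (F u) = lext F (rmul_w a b u)"
  shows "nabla X (rho c x) = rho c (nabla X x)"
proof -
  have "nabla X (rho c (Poly_Mapping.single k 1)) = rho c (nabla X (Poly_Mapping.single k 1))" for k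
    by (cases k) (simp add: rho_c nabla_single nabla_tensor rho_sum rho_left_mult_tensor[OF rho_c] F_rmul_w
        Dx_def Dy_def)
  then show ?thesis
    by (subst (1 2) lext_single_one[symmetric, of x]) (simp add: rho_lext nabla_def lext_lext)
qed

lemma nabla_rho_eta: "nabla X (rho (Kb 0 {i}) x) = rho (Kb 0 {i}) (nabla X x)"
  by (rule nabla_rho_left_mult[where F = "lmul_eta i"]) (simp_all add: rho_eta rmul_w_lmul_eta)

lemma nabla_rho_Theta: "nabla X (rho (Kb 0 {}) x) = rho (Kb 0 {}) (nabla X x)"
  by (rule nabla_rho_left_mult[where F = Theta]) (simp add: rho_Theta Theta_def, rule rmul_w_Theta)

lemmas nabla_utensor_expand =
  nabla_utensor sum_one_two rmul_w_def rmul_eta_def Let_def tensor_single_eq_utensor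

lemmas rho_utensor_simps = rho_deg0_utensor rho_pos_utensor rho_eta_utensor

lemma rho_high_utensor_eta:
  assumes "2 \<le> gdeg b"
  shows "rho b (utensor (0, {j}) q) = 0"
proof -
  obtain m I where b: "b = Kb m I"
    using assms by (cases b) auto
  have "gact rho (gbr b (Kb 0 {j})) (utensor (0, {}) q) = 0"
    using assms gdeg_Kb_eta_bracket unfolding b by (intro gact_eq_zero rho_pos_utensor) fastforce
  then show ?thesis
    using assms by (simp add: rho_utensor_eta rho_pos_utensor)
qed

lemma rho_high_nabla_utensor: "2 \<le> gdeg b \<Longrightarrow> rho b (nabla X (utensor (0, {}) q)) = 0"
  by (simp add: nabla_utensor_expand rho_sum rho_high_utensor_eta)

(* Expand nabla (1 (x) q) into terms eta_j (x) d_(x_a) d_(y_b) q, move rho b past eta_j by the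
   bracket relation, evaluate the brackets [b, xi_j] and normal-order the Weyl-algebra words. *)
lemma rho_deg0_nabla_utensor:
  "gdeg b = 0 \<Longrightarrow> rho b (nabla X (utensor (0, {}) q)) = nabla X (utensor (0, {}) (G0 X b q))"
  apply (drule gdeg_eq_0_cases)
  apply (elim insertE emptyE; hypsubst; cases X)
  apply ((simp_all add: nabla_utensor_expand)?)
  apply ((simp_all add: rho_sum rho_utensor_eta rho_utensor_simps)?)
  apply ((simp_all add: bracket_simps insert_commute rho_utensor_simps)?)
  apply ((simp_all add: G0_simps idx_set_eq_iff)?)
  apply ((simp_all add: weyl_normalize)?)
  apply ((rule poly_mapping_eqI,
      simp add: lookup_add lookup_minus lookup_utensor iX_def jX_def algebra_simps)+)?
  done

lemma rho_deg1_nabla_utensor: "gdeg b = 1 \<Longrightarrow> rho b (nabla X (utensor (0, {}) q)) = 0"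
  apply (drule gdeg_eq_1_cases)
  apply (elim insertE emptyE; hypsubst; cases X)
  apply ((simp_all add: nabla_utensor_expand)?)
  apply ((simp_all add: rho_sum rho_utensor_eta rho_utensor_simps)?)
  apply ((simp_all add: bracket_simps insert_commute rho_utensor_simps)?)
  apply ((simp_all add: G0_simps idx_set_eq_iff)?)
  apply ((simp_all add: weyl_normalize)?)
  apply ((rule poly_mapping_eqI,
      simp add: lookup_add lookup_minus lookup_utensor iX_def jX_def algebra_simps)+)?
  done

definition nabla_commutes :: "melt \<Rightarrow> bool" where
  "nabla_commutes x \<longleftrightarrow> (\<forall>b. nabla X (rho b x) = rho b (nabla X x))"

lemma nabla_commutes_cmul: "nabla_commutes x \<Longrightarrow> nabla_commutes (cmul c x)"
  unfolding nabla_commutes_def by simp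

lemma nabla_commutes_sum: "(\<And>a. a \<in> A \<Longrightarrow> nabla_commutes (f a)) \<Longrightarrow> nabla_commutes (sum f A)"
  unfolding nabla_commutes_def
  by (induction A rule: infinite_finite_induct) (simp_all add: rho_sum nabla_sum)

lemma nabla_commutes_rho:
  assumes x: "nabla_commutes x" and c: "\<And>y. nabla X (rho c y) = rho c (nabla X y)"
  shows "nabla_commutes (rho c x)"
  unfolding nabla_commutes_def
proof
  fix b
  have nabla_gact: "nabla X (gact rho z x) = gact rho z (nabla X x)" for z
    using x unfolding gact_eq_lext nabla_commutes_def by (simp add: nabla_def lext_lext)
  have "nabla X (rho b (rho c x)) =
      nabla X (cmul ((-1) ^ (par b * par c)) (rho c (rho b x)) + gact rho (gbr b c) x)"
    by (simp only: rho_bracket[of b c])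
  also have "\<dots> = cmul ((-1) ^ (par b * par c)) (rho c (rho b (nabla X x)))
      + gact rho (gbr b c) (nabla X x)"
    using x by (simp add: c nabla_gact nabla_commutes_def)
  also have "\<dots> = rho b (nabla X (rho c x))"
    by (simp only: rho_bracket[of b c] c)
  finally show "nabla X (rho b (rho c x)) = rho b (nabla X (rho c x))" .
qed

lemma nabla_commutes_utensor: "nabla_commutes (utensor (0, {}) q)"
  unfolding nabla_commutes_def
proof
  fix b
  consider "gdeg b < 0" | "gdeg b = 0" | "gdeg b = 1" | "2 \<le> gdeg b"
    by linarith
  then show "nabla X (rho b (utensor (0, {}) q)) = rho b (nabla X (utensor (0, {}) q))"
  proof cases
    case 1
    then show ?thesis
      using gdeg_neg_cases nabla_rho_Theta nabla_rho_eta by blast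
  next
    case 2
    then show ?thesis
      by (simp add: rho_deg0_utensor rho_deg0_nabla_utensor)
  next
    case 3
    then show ?thesis
      by (simp add: rho_pos_utensor rho_deg1_nabla_utensor)
  next
    case 4
    then show ?thesis
      by (simp add: rho_pos_utensor rho_high_nabla_utensor)
  qed
qed

lemma nabla_commutes_single_0: "nabla_commutes (Poly_Mapping.single ((0, I), v) 1)"
proof (induction I arbitrary: v rule: finite_induct[OF finite_idx_set])
  case 1
  show ?case
    using nabla_commutes_utensor[of "Poly_Mapping.single v 1"] by (simp add: utensor_def)
next
  case (2 i F)
  have "Poly_Mapping.single ((0, insert i F), v) 1 =
      cmul ((-1) ^ card {j \<in> F. ordi j < ordi i}) (rho (Kb 0 {i}) (Poly_Mapping.single ((0, F), v) 1))"
    using \<open>i \<notin> F\<close> by (simp add: rho_eta lmul_eta_def)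
  then show ?case
    using nabla_commutes_rho[OF "2.IH" nabla_rho_eta] by (simp only: nabla_commutes_cmul)
qed

lemma nabla_commutes_single: "nabla_commutes (Poly_Mapping.single ((k, I), v) 1)"
proof (induction k)
  case 0
  show ?case by (rule nabla_commutes_single_0)
next
  case (Suc k)
  have "nabla_commutes (rho (Kb 0 {}) (Poly_Mapping.single ((k, I), v) 1))"
    using Suc nabla_rho_Theta by (rule nabla_commutes_rho)
  then show ?case
    by (simp add: rho_Theta)
qed

theorem nabla_rho_commute: "nabla X (rho b x) = rho b (nabla X x)"
proof -
  have "nabla_commutes (\<Sum>k\<in>Poly_Mapping.keys x. cmul (Poly_Mapping.lookup x k) (Poly_Mapping.single k 1))"
    by (rule nabla_commutes_sum, rule nabla_commutes_cmul) (metis nabla_commutes_single prod.collapse)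
  then have "nabla_commutes x"
    by (simp only: poly_mapping_eq_sum_single[symmetric])
  then show ?thesis
    unfolding nabla_commutes_def by blast
qed

end

theorem proposition4p5:
  fixes X :: VX and rho :: "gb \<Rightarrow> melt \<Rightarrow> melt"
  shows "(induced_rep X rho \<longrightarrow> (\<forall>b x. nabla X (rho b x) = rho b (nabla X x)))
    \<and> (\<forall>x y. nabla X (x + y) = nabla X x + nabla X y)
    \<and> (\<forall>c x. nabla X (cmul c x) = cmul c (nabla X x))
    \<and> (\<forall>x. nabla X (nabla X x) = 0)
    \<and> (\<forall>m n x. x \<in> Mspace X m n \<longrightarrow> nabla X x \<in> Mspace X (m - 1) (n - 1))
    \<and> (\<forall>m n :: nat. 1 \<le> m \<longrightarrow> 1 \<le> n \<longrightarrow>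
          (\<exists>x \<in> Mspace XA (int m) (int n). nabla XA x \<noteq> 0))
    \<and> (\<forall>m n :: nat. 1 \<le> n \<longrightarrow>
          (\<exists>x \<in> Mspace XB (- int m) (int n). nabla XB x \<noteq> 0))
    \<and> (\<forall>m n :: nat. (\<exists>x \<in> Mspace XC (- int m) (- int n). nabla XC x \<noteq> 0))
    \<and> (\<forall>m n :: nat. 1 \<le> m \<longrightarrow>
          (\<exists>x \<in> Mspace XD (int m) (- int n). nabla XD x \<noteq> 0))"
proof -
  have "induced_rep X rho \<Longrightarrow> nabla X (rho b x) = rho b (nabla X x)" for b x
    by (rule induced_module.nabla_rho_commute[OF induced_module.intro])
  moreover have "\<exists>x \<in> Mspace XA (int m) (int n). nabla XA x \<noteq> 0" if "1 \<le> m" "1 \<le> n" for m n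
    using nabla_nonzero_in_Mspace[of XA m n] that by (simp add: Ex_def Ey_def xdual_def ydual_def)
  moreover have "\<exists>x \<in> Mspace XB (- int m) (int n). nabla XB x \<noteq> 0" if "1 \<le> n" for m n
    using nabla_nonzero_in_Mspace[of XB m n] that by (simp add: Ex_def Ey_def xdual_def ydual_def)
  moreover have "\<exists>x \<in> Mspace XC (- int m) (- int n). nabla XC x \<noteq> 0" for m n
    using nabla_nonzero_in_Mspace[of XC m n] by (simp add: Ex_def Ey_def xdual_def ydual_def)
  moreover have "\<exists>x \<in> Mspace XD (int m) (- int n). nabla XD x \<noteq> 0" if "1 \<le> m" for m n
    using nabla_nonzero_in_Mspace[of XD m n] that by (simp add: Ex_def Ey_def xdual_def ydual_def)
  ultimately show ?thesis
    using nabla_nabla nabla_Mspace by simp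
qed

end
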